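(* Fix $k\ge1$. For every $j\ge2$, $$q(j+1)-q(j)=\begin{cases}F_{2k}&\text{if the }(j-1)\text{th letter of }\mathcal S\text{ is }A,\\ F_{2k+1}&\text{if the }(j-1)\text{th letter of }\mathcal S\text{ is }B.\end{cases}$$
   Context: Fibonacci numbers: $F_1=F_2=1$, $F_{n+1}=F_n+F_{n-1}$ for $n\ge2$. Chung–Graham decomposition: every positive integer $n$ has a unique representation $n=\sum_{i\ge1}c_iF_{2i}$ with $c_i\in\{0,1,2\}$, only finitely many nonzero, such that whenever $c_i=c_j=2$ with $i<j$ there is $k$ with $i<k<j$ and $c_k=0$. Let $\mathcal{CG}(n)$ be the set of $F_{2i}$ with $c_i\neq0$. For $k\ge1$, $A_{2k}=\{n\ge1:\min\mathcal{CG}(n)=F_{2k}\}$, and $q(1)<q(2)<q(3)<\cdots$ denote the elements of $A_{2k}$ listed in increasing order. Golden string: define finite words over $\{A,B\}$ by $S_1=B$, $S_2=BA$, $S_n=S_{n-1}:S_{n-2}$ for $n\ge3$, where $:$ denotes concatenation; each $S_n$ is a prefix of $S_{n+1}$, and $\mathcal S$ is the infinite word having every $S_n$ as a prefix ($\mathcal S=BABBABABBABB\ldots$). Letters of $\mathcal S$ are indexed starting at $1$. *)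

theory Defs
  imports Main "HOL-Number_Theory.Fib" "HOL-Library.Infinite_Set"
begin

(* Fibonacci numbers: F_n = fib n (fib 1 = fib 2 = 1). *)

(* Chung-Graham representation of n: coefficient function c, with c i the
   coefficient of F_{2i} (i >= 1); c 0 = 0 encodes that indices start at 1. *)
definition is_CG_rep :: "nat \<Rightarrow> (nat \<Rightarrow> nat) \<Rightarrow> bool" where
  "is_CG_rep n c \<longleftrightarrow>
     c 0 = 0 \<and> (\<forall>i. c i \<le> 2) \<and> finite {i. c i \<noteq> 0} \<and>
     n = (\<Sum>i\<in>{i. c i \<noteq> 0}. c i * fib (2 * i)) \<and>
     (\<forall>i j. i < j \<and> c i = 2 \<and> c j = 2 \<longrightarrow> (\<exists>l. i < l \<and> l < j \<and> c l = 0))"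

definition CG_coeff :: "nat \<Rightarrow> nat \<Rightarrow> nat" where
  "CG_coeff n = (THE c. is_CG_rep n c)"

definition CG :: "nat \<Rightarrow> nat set" where
  "CG n = {fib (2 * i) | i. i \<ge> 1 \<and> CG_coeff n i \<noteq> 0}"

definition A2k :: "nat \<Rightarrow> nat set" where
  "A2k k = {n. n \<ge> 1 \<and> Min (CG n) = fib (2 * k)}"

definition q :: "nat \<Rightarrow> nat \<Rightarrow> nat" where
  "q k j = enumerate (A2k k) (j - 1)"

datatype letter = A | B

fun S :: "nat \<Rightarrow> letter list" where
  "S 0 = []"
| "S (Suc 0) = [B]"
| "S (Suc (Suc 0)) = [B, A]"
| "S (Suc (Suc (Suc n))) = S (Suc (Suc n)) @ S (Suc n)"

(* i-th letter (1-indexed) of the infinite golden string: read off from any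
   S_n long enough (each S_n is a prefix of S_{n+1}) *)
definition golden :: "nat \<Rightarrow> letter" where
  "golden i = S (LEAST n. i \<le> length (S n)) ! (i - 1)"

end

theory Submission
  imports Defs
begin

(* Writing F = fib (2 * m + 2) and G = fib (2 * m + 1), we have fib (2 * m + 4) = 2 F + G, and the
   Chung-Graham digits of n < fib (2 * m + 4) are those of some n' < F extended by a digit 0, 1 or 2
   at position m + 1, where the digit 2 is possible exactly for n' < G.  Hence the indicator word of
   A_{2k} on [0, fib (2 * m + 4)) is W W' U', where W and U are its indicator words on [0, F) and
   [0, G) and the prime means that the first entry is replaced by "m + 1 = k".  Starting from
   m = k - 1, where both words are all False, the indicator words are block codings of words
   P_i, Q_i over {A, B} with P_{i+1} = P_i B P_i B Q_i and Q_{i+1} = P_i B Q_i, a letter A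
   standing for a gap F_{2k} and B for a gap F_{2k+1}.  Since P_i and Q_i are A S_{2i+2} and
   A S_{2i+1} without their last two letters, the gaps of A_{2k} are read off the golden string. *)

definition CG_digits :: "nat \<Rightarrow> (nat \<Rightarrow> nat) \<Rightarrow> bool" where
  "CG_digits m c \<longleftrightarrow> c 0 = 0 \<and> (\<forall>i. c i \<le> 2) \<and> (\<forall>i>m. c i = 0) \<and>
     (\<forall>i j. i < j \<and> c i = 2 \<and> c j = 2 \<longrightarrow> (\<exists>l. i < l \<and> l < j \<and> c l = 0))"

text \<open>The digit 2 may be placed at position \<open>m + 1\<close> without violating the Chung-Graham condition.\<close>

definition allows_top_two :: "nat \<Rightarrow> (nat \<Rightarrow> nat) \<Rightarrow> bool" where
  "allows_top_two m c \<longleftrightarrow> (\<forall>i. c i = 2 \<longrightarrow> (\<exists>l. i < l \<and> l \<le> m \<and> c l = 0))"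

definition CG_val :: "nat \<Rightarrow> (nat \<Rightarrow> nat) \<Rightarrow> nat" where
  "CG_val m c = (\<Sum>i=1..m. c i * fib (2 * i))"

lemma fib_even_Suc: "fib (2 * Suc m + 2) = 2 * fib (2 * m + 2) + fib (2 * m + 1)"
  by (simp add: numeral_eq_Suc)

lemma fib_odd_Suc: "fib (2 * Suc m + 1) = fib (2 * m + 2) + fib (2 * m + 1)"
  by (simp add: numeral_eq_Suc)

lemma fib_odd_eq: "k \<ge> 1 \<Longrightarrow> fib (2 * k + 1) = fib (2 * k) + fib (2 * k - 1)"
  by (cases k) (simp_all add: numeral_eq_Suc)

lemma fib_pos: "n \<ge> 1 \<Longrightarrow> fib n \<ge> 1"
  using fib_neq_0_nat[of n] by simp

lemma less_fib_double: "n < fib (2 * n + 2)"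
  by (induction n) (simp_all add: numeral_eq_Suc)

lemma CG_val_Suc: "CG_val (Suc m) c = CG_val m c + c (Suc m) * fib (2 * m + 2)"
  unfolding CG_val_def by simp

lemma CG_val_upd_above: "m < i \<Longrightarrow> CG_val m (c(i := v)) = CG_val m c"
  unfolding CG_val_def by (rule sum.cong) auto

lemma CG_val_upd_Suc: "CG_val (Suc m) (c(Suc m := v)) = CG_val m c + v * fib (2 * m + 2)"
  by (simp add: CG_val_Suc CG_val_upd_above)

lemma CG_digits_Suc: "CG_digits m c \<Longrightarrow> CG_digits (Suc m) c \<and> CG_val (Suc m) c = CG_val m c"
  unfolding CG_digits_def by (simp add: CG_val_Suc)

lemma CG_digits_mono:
  assumes "CG_digits m c" "m \<le> m'"
  shows "CG_digits m' c \<and> CG_val m' c = CG_val m c"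
  using assms(2) by (induction m' rule: dec_induct) (use assms(1) CG_digits_Suc in auto)

lemma CG_digits_drop_top: "CG_digits (Suc m) c \<Longrightarrow> CG_digits m (c(Suc m := 0))"
  unfolding CG_digits_def
proof (elim conjE, intro conjI allI impI)
  fix i j assume twos: "\<forall>i j. i < j \<and> c i = 2 \<and> c j = 2 \<longrightarrow> (\<exists>l>i. l < j \<and> c l = 0)"
    and ij: "i < j \<and> (c(Suc m := 0)) i = 2 \<and> (c(Suc m := 0)) j = 2"
  then obtain l where "i < l" "l < j" "c l = 0" by (auto split: if_splits)
  then show "\<exists>l>i. l < j \<and> (c(Suc m := 0)) l = 0" by (intro exI[of _ l]) auto
qed auto

lemma CG_digits_put_one: "CG_digits m c \<Longrightarrow> CG_digits (Suc m) (c(Suc m := 1))"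
  unfolding CG_digits_def
proof (elim conjE, intro conjI allI impI)
  fix i j assume twos: "\<forall>i j. i < j \<and> c i = 2 \<and> c j = 2 \<longrightarrow> (\<exists>l>i. l < j \<and> c l = 0)"
    and top: "\<forall>i>m. c i = 0"
    and ij: "i < j \<and> (c(Suc m := 1)) i = 2 \<and> (c(Suc m := 1)) j = 2"
  then have "c i = 2" "c j = 2" "j \<le> m" by (auto split: if_splits simp: not_less[symmetric])
  then obtain l where "i < l" "l < j" "c l = 0" using twos ij by blast
  then show "\<exists>l>i. l < j \<and> (c(Suc m := 1)) l = 0" using \<open>j \<le> m\<close> by (intro exI[of _ l]) auto
qed auto

lemma CG_digits_put_two:
  "CG_digits m c \<Longrightarrow> allows_top_two m c \<Longrightarrow> CG_digits (Suc m) (c(Suc m := 2))"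
  unfolding CG_digits_def
proof (elim conjE, intro conjI allI impI)
  fix i j assume twos: "\<forall>i j. i < j \<and> c i = 2 \<and> c j = 2 \<longrightarrow> (\<exists>l>i. l < j \<and> c l = 0)"
    and two: "allows_top_two m c" and top: "\<forall>i>m. c i = 0"
    and ij: "i < j \<and> (c(Suc m := 2)) i = 2 \<and> (c(Suc m := 2)) j = 2"
  then have "i \<le> m" "c i = 2" by (auto split: if_splits simp: not_less[symmetric])
  show "\<exists>l>i. l < j \<and> (c(Suc m := 2)) l = 0"
  proof (cases "j = Suc m")
    case True
    obtain l where "i < l" "l \<le> m" "c l = 0" using two \<open>c i = 2\<close> unfolding allows_top_two_def by blast
    then show ?thesis using True by (intro exI[of _ l]) auto
  next
    case False
    then have "c j = 2" "j \<le> m" using ij top by (auto simp: not_less[symmetric])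
    then obtain l where "i < l" "l < j" "c l = 0" using twos ij \<open>c i = 2\<close> by blast
    then show ?thesis using \<open>j \<le> m\<close> by (intro exI[of _ l]) auto
  qed
qed auto

lemma allows_top_two_Suc: "CG_digits m c \<Longrightarrow> allows_top_two (Suc m) c"
  unfolding allows_top_two_def CG_digits_def
proof (elim conjE, intro allI impI)
  fix i assume "\<forall>i>m. c i = 0" "c i = 2"
  then have "i < Suc m" "c (Suc m) = 0" by (cases "i > m", auto)
  then show "\<exists>l>i. l \<le> Suc m \<and> c l = 0" by blast
qed

lemma allows_top_two_put_one:
  "allows_top_two m c \<Longrightarrow> allows_top_two (Suc m) (c(Suc m := 1))"
  unfolding allows_top_two_def
proof (intro allI impI)
  fix i assume two: "\<forall>i. c i = 2 \<longrightarrow> (\<exists>l>i. l \<le> m \<and> c l = 0)" and "(c(Suc m := 1)) i = 2"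
  then have "c i = 2" by (auto split: if_splits)
  then obtain l where "i < l" "l \<le> m" "c l = 0" using two by blast
  then show "\<exists>l>i. l \<le> Suc m \<and> (c(Suc m := 1)) l = 0" by (intro exI[of _ l]) auto
qed

lemma allows_top_two_drop_one:
  "c (Suc m) = 1 \<Longrightarrow> allows_top_two (Suc m) c \<Longrightarrow> allows_top_two m (c(Suc m := 0))"
  unfolding allows_top_two_def
proof (intro allI impI)
  fix i assume "c (Suc m) = 1" and two: "\<forall>i. c i = 2 \<longrightarrow> (\<exists>l>i. l \<le> Suc m \<and> c l = 0)"
    and "(c(Suc m := 0)) i = 2"
  then have "c i = 2" by (auto split: if_splits)
  then obtain l where "i < l" "l \<le> Suc m" "c l = 0" using two by blast
  then show "\<exists>l>i. l \<le> m \<and> (c(Suc m := 0)) l = 0"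
    using \<open>c (Suc m) = 1\<close> by (intro exI[of _ l]) (auto simp: le_Suc_eq)
qed

lemma allows_top_two_drop_two:
  "CG_digits (Suc m) c \<Longrightarrow> c (Suc m) = 2 \<Longrightarrow> allows_top_two m (c(Suc m := 0))"
  unfolding allows_top_two_def CG_digits_def
proof (elim conjE, intro allI impI)
  fix i assume top: "\<forall>i>Suc m. c i = 0" and "c (Suc m) = 2"
    and twos: "\<forall>i j. i < j \<and> c i = 2 \<and> c j = 2 \<longrightarrow> (\<exists>l>i. l < j \<and> c l = 0)"
    and upd: "(c(Suc m := 0)) i = 2"
  from upd have "c i = 2" "i \<noteq> Suc m" by (auto split: if_splits)
  moreover have "\<not> i > Suc m" using top \<open>c i = 2\<close> by auto
  ultimately have "i < Suc m" by simp
  then obtain l where "i < l" "l < Suc m" "c l = 0" using twos \<open>c i = 2\<close> \<open>c (Suc m) = 2\<close> by blast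
  then show "\<exists>l>i. l \<le> m \<and> (c(Suc m := 0)) l = 0" by (intro exI[of _ l]) auto
qed

lemma CG_val_drop_top: "CG_val (Suc m) c = CG_val m (c(Suc m := 0)) + c (Suc m) * fib (2 * m + 2)"
  by (simp add: CG_val_Suc CG_val_upd_above)

lemma add_mult_eq_cancel:
  fixes a b x y F :: nat
  assumes "a < F" "b < F" "a + x * F = b + y * F"
  shows "x = y \<and> a = b"
proof -
  have "x = (a + x * F) div F" "y = (b + y * F) div F" using assms(1,2) by simp_all
  then show ?thesis using assms(3) by simp
qed

lemma CG_val_bound:
  "CG_digits m c \<Longrightarrow> CG_val m c < fib (2 * m + 2) \<and> (allows_top_two m c \<longrightarrow> CG_val m c < fib (2 * m + 1))"
proof (induction m arbitrary: c)
  case 0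
  then show ?case by (simp add: CG_val_def)
next
  case (Suc m)
  define c' where "c' = c(Suc m := 0)"
  have "CG_digits m c'" using CG_digits_drop_top[OF Suc.prems] c'_def by simp
  then have IH: "CG_val m c' < fib (2 * m + 2)" "allows_top_two m c' \<Longrightarrow> CG_val m c' < fib (2 * m + 1)"
    using Suc.IH by auto
  have val: "CG_val (Suc m) c = CG_val m c' + c (Suc m) * fib (2 * m + 2)"
    unfolding c'_def by (rule CG_val_drop_top)
  have "c (Suc m) \<le> 2" using Suc.prems unfolding CG_digits_def by auto
  then consider "c (Suc m) = 0" | "c (Suc m) = 1" | "c (Suc m) = 2" by linarith
  then show ?case
  proof cases
    case 1
    then show ?thesis using val IH(1) by (simp add: fib_even_Suc fib_odd_Suc)
  next
    case 2
    then have "allows_top_two (Suc m) c \<Longrightarrow> allows_top_two m c'"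
      unfolding c'_def by (rule allows_top_two_drop_one)
    then show ?thesis using val IH 2 by (auto simp: fib_even_Suc fib_odd_Suc)
  next
    case 3
    then have "allows_top_two m c'" and "\<not> allows_top_two (Suc m) c"
      using allows_top_two_drop_two[OF Suc.prems] unfolding c'_def allows_top_two_def by auto
    then show ?thesis using val IH 3 by (auto simp: fib_even_Suc)
  qed
qed

lemma CG_val_inj: "CG_digits m c \<Longrightarrow> CG_digits m d \<Longrightarrow> CG_val m c = CG_val m d \<Longrightarrow> c = d"
proof (induction m arbitrary: c d)
  case 0
  then show ?case unfolding CG_digits_def by (metis neq0_conv ext)
next
  case (Suc m)
  define c' where "c' = c(Suc m := 0)"
  define d' where "d' = d(Suc m := 0)"
  have digits: "CG_digits m c'" "CG_digits m d'"
    using CG_digits_drop_top Suc.prems c'_def d'_def by blast+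
  have bounds: "CG_val m c' < fib (2 * m + 2)" "CG_val m d' < fib (2 * m + 2)"
    using CG_val_bound digits by blast+
  have eq: "CG_val m c' + c (Suc m) * fib (2 * m + 2) = CG_val m d' + d (Suc m) * fib (2 * m + 2)"
    using Suc.prems(3) CG_val_drop_top[of m c] CG_val_drop_top[of m d] c'_def d'_def by simp
  then have top: "c (Suc m) = d (Suc m)" and "CG_val m c' = CG_val m d'"
    using add_mult_eq_cancel[OF bounds] by blast+
  then have "c' = d'" using Suc.IH digits by blast
  then show ?case using top unfolding c'_def d'_def by (metis fun_upd_triv fun_upd_upd)
qed

lemma CG_val_surj:
  "(\<forall>n < fib (2 * m + 2). \<exists>c. CG_digits m c \<and> CG_val m c = n) \<and>
   (\<forall>n < fib (2 * m + 1). \<exists>c. CG_digits m c \<and> allows_top_two m c \<and> CG_val m c = n)"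
proof (induction m)
  case 0
  have "CG_digits 0 (\<lambda>_. 0)" "allows_top_two 0 (\<lambda>_. 0)" "CG_val 0 (\<lambda>_. 0) = 0"
    unfolding CG_digits_def allows_top_two_def CG_val_def by simp_all
  then show ?case by auto
next
  case (Suc m)
  define F where "F = fib (2 * m + 2)"
  define G where "G = fib (2 * m + 1)"
  have even: "\<exists>c. CG_digits (Suc m) c \<and> CG_val (Suc m) c = n" if "n < 2 * F + G" for n
  proof -
    consider "n < F" | "F \<le> n" "n < 2 * F" | "2 * F \<le> n" by linarith
    then show ?thesis
    proof cases
      case 1
      then obtain c where "CG_digits m c" "CG_val m c = n" using Suc.IH F_def by blast
      then show ?thesis using CG_digits_Suc by blast
    next
      case 2
      then have "n - F < fib (2 * m + 2)" using F_def by linarith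
      then obtain d where "CG_digits m d" "CG_val m d = n - F" using Suc.IH by blast
      then show ?thesis using CG_digits_put_one CG_val_upd_Suc[of m d 1] 2 F_def
        by (intro exI[of _ "d(Suc m := 1)"]) auto
    next
      case 3
      then have "n - 2 * F < fib (2 * m + 1)" using that G_def by linarith
      then obtain d where "CG_digits m d" "allows_top_two m d" "CG_val m d = n - 2 * F"
        using Suc.IH by blast
      then show ?thesis using CG_digits_put_two CG_val_upd_Suc[of m d 2] 3 F_def
        by (intro exI[of _ "d(Suc m := 2)"]) auto
    qed
  qed
  have odd: "\<exists>c. CG_digits (Suc m) c \<and> allows_top_two (Suc m) c \<and> CG_val (Suc m) c = n"
    if "n < F + G" for n
  proof (cases "n < F")
    case True
    then obtain c where "CG_digits m c" "CG_val m c = n" using Suc.IH F_def by blast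
    then show ?thesis using CG_digits_Suc allows_top_two_Suc by blast
  next
    case False
    then have "n - F < fib (2 * m + 1)" using that G_def by linarith
    then obtain d where "CG_digits m d" "allows_top_two m d" "CG_val m d = n - F"
      using Suc.IH by blast
    then show ?thesis using CG_digits_put_one allows_top_two_put_one CG_val_upd_Suc[of m d 1] False F_def
      by (intro exI[of _ "d(Suc m := 1)"]) auto
  qed
  show ?case using even odd unfolding F_def G_def fib_even_Suc fib_odd_Suc by auto
qed

lemma CG_digits_support: "CG_digits m c \<Longrightarrow> {i. c i \<noteq> 0} \<subseteq> {1..m}"
proof
  fix i assume c: "CG_digits m c" and "i \<in> {i. c i \<noteq> 0}"
  then have "c i \<noteq> 0" by simp
  moreover have "c 0 = 0" "\<forall>i>m. c i = 0" using c unfolding CG_digits_def by auto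
  ultimately show "i \<in> {1..m}" by (cases "i = 0") (auto simp: Suc_le_eq not_less[symmetric])
qed

lemma CG_val_eq_sum_support: "CG_digits m c \<Longrightarrow> CG_val m c = (\<Sum>i\<in>{i. c i \<noteq> 0}. c i * fib (2 * i))"
  unfolding CG_val_def by (rule sum.mono_neutral_right) (use CG_digits_support in auto)

lemma is_CG_rep_iff: "is_CG_rep n c \<longleftrightarrow> (\<exists>m. CG_digits m c \<and> CG_val m c = n)"
proof
  assume "is_CG_rep n c"
  then have c0: "c 0 = 0" and le2: "\<forall>i. c i \<le> 2" and fin: "finite {i. c i \<noteq> 0}"
    and n: "n = (\<Sum>i\<in>{i. c i \<noteq> 0}. c i * fib (2 * i))"
    and twos: "\<forall>i j. i < j \<and> c i = 2 \<and> c j = 2 \<longrightarrow> (\<exists>l. i < l \<and> l < j \<and> c l = 0)"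
    unfolding is_CG_rep_def by simp_all
  obtain m where "\<forall>i\<in>{i. c i \<noteq> 0}. i \<le> m" using fin finite_nat_set_iff_bounded_le by blast
  then have "\<forall>i>m. c i = 0" by (meson mem_Collect_eq not_le)
  then have "CG_digits m c" unfolding CG_digits_def using c0 le2 twos by blast
  then show "\<exists>m. CG_digits m c \<and> CG_val m c = n" using n CG_val_eq_sum_support by auto
next
  assume "\<exists>m. CG_digits m c \<and> CG_val m c = n"
  then obtain m where m: "CG_digits m c" "CG_val m c = n" by blast
  then have "finite {i. c i \<noteq> 0}" using CG_digits_support finite_subset by blast
  then show "is_CG_rep n c"
    using m CG_val_eq_sum_support[OF m(1)] unfolding is_CG_rep_def CG_digits_def by blast
qed

lemma CG_coeff_CG_val: "CG_digits m c \<Longrightarrow> CG_coeff (CG_val m c) = c"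
  unfolding CG_coeff_def
proof (rule the_equality)
  assume c: "CG_digits m c"
  then show "is_CG_rep (CG_val m c) c" unfolding is_CG_rep_iff by blast
  fix d assume "is_CG_rep (CG_val m c) d"
  then obtain m' where d: "CG_digits m' d" "CG_val m' d = CG_val m c" unfolding is_CG_rep_iff by blast
  have "CG_digits (max m m') c \<and> CG_val (max m m') c = CG_val m c"
    "CG_digits (max m m') d \<and> CG_val (max m m') d = CG_val m' d"
    using CG_digits_mono[OF c, of "max m m'"] CG_digits_mono[OF d(1), of "max m m'"] by simp_all
  then show "d = c" using CG_val_inj[of "max m m'" d c] d(2) by simp
qed

lemma CG_coeff_below:
  "n < fib (2 * m + 2) \<Longrightarrow> CG_digits m (CG_coeff n) \<and> CG_val m (CG_coeff n) = n"
proof -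
  assume "n < fib (2 * m + 2)"
  then obtain c where "CG_digits m c" "CG_val m c = n" using CG_val_surj[of m] by blast
  then show ?thesis using CG_coeff_CG_val[of m c] by simp
qed

lemma CG_coeff_add_one:
  assumes "n < fib (2 * m + 2)"
  shows "CG_coeff (fib (2 * m + 2) + n) = (CG_coeff n)(Suc m := 1)"
proof -
  have c: "CG_digits m (CG_coeff n)" "CG_val m (CG_coeff n) = n"
    using CG_coeff_below[OF assms] by blast+
  show ?thesis
    using CG_coeff_CG_val[OF CG_digits_put_one[OF c(1)]] CG_val_upd_Suc[of m "CG_coeff n" 1] c(2)
    by (simp add: add.commute)
qed

lemma CG_coeff_add_two:
  assumes "n < fib (2 * m + 1)"
  shows "CG_coeff (2 * fib (2 * m + 2) + n) = (CG_coeff n)(Suc m := 2)"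
proof -
  obtain c where c: "CG_digits m c" "allows_top_two m c" "CG_val m c = n"
    using CG_val_surj[of m] assms by blast
  then have "CG_coeff n = c" using CG_coeff_CG_val by blast
  then show ?thesis
    using CG_coeff_CG_val[OF CG_digits_put_two[OF c(1,2)]] CG_val_upd_Suc[of m c 2] c(3)
    by (simp add: add.commute)
qed

lemma CG_val_eq_0_iff:
  assumes "CG_digits m c"
  shows "CG_val m c = 0 \<longleftrightarrow> (\<forall>i. c i = 0)"
proof -
  have "fib (2 * i) \<noteq> 0" if "i \<in> {1..m}" for i using that fib_neq_0_nat[of "2 * i"] by simp
  then have "CG_val m c = 0 \<longleftrightarrow> (\<forall>i\<in>{1..m}. c i = 0)" unfolding CG_val_def by fastforce
  also have "\<dots> \<longleftrightarrow> (\<forall>i. c i = 0)" using CG_digits_support[OF assms] by auto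
  finally show ?thesis .
qed

lemma Min_support_bounds:
  assumes "CG_digits m c" "\<exists>i. c i \<noteq> 0"
  shows "finite {i. c i \<noteq> 0} \<and> 1 \<le> Min {i. c i \<noteq> 0} \<and> Min {i. c i \<noteq> 0} \<le> m"
proof -
  have below: "{i. c i \<noteq> 0} \<subseteq> {1..m}" using CG_digits_support[OF assms(1)] .
  then have "finite {i. c i \<noteq> 0}" using finite_subset by blast
  moreover have "Min {i. c i \<noteq> 0} \<in> {i. c i \<noteq> 0}" using calculation assms(2) by (intro Min_in) auto
  ultimately show ?thesis using below by auto
qed

lemma Min_support_put_top:
  assumes "CG_digits m c" "v \<noteq> 0"
  shows "Min {i. (c(Suc m := v)) i \<noteq> 0} = (if CG_val m c = 0 then Suc m else Min {i. c i \<noteq> 0})"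
proof -
  have "c (Suc m) = 0" using assms(1) unfolding CG_digits_def by simp
  then have support: "{i. (c(Suc m := v)) i \<noteq> 0} = insert (Suc m) {i. c i \<noteq> 0}"
    using assms(2) by auto
  show ?thesis
  proof (cases "CG_val m c = 0")
    case True
    then show ?thesis using support CG_val_eq_0_iff[OF assms(1)] by simp
  next
    case False
    then have "finite {i. c i \<noteq> 0}" "{i. c i \<noteq> 0} \<noteq> {}" "Min {i. c i \<noteq> 0} \<le> m"
      using Min_support_bounds[OF assms(1)] CG_val_eq_0_iff[OF assms(1)] by auto
    then show ?thesis using support False by (simp add: Min_insert)
  qed
qed

definition CG_lowest :: "nat \<Rightarrow> nat \<Rightarrow> bool" where
  "CG_lowest k n \<longleftrightarrow> n \<ge> 1 \<and> Min {i. CG_coeff n i \<noteq> 0} = k"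

lemma CG_lowest_add_one:
  assumes "n < fib (2 * m + 2)"
  shows "CG_lowest k (fib (2 * m + 2) + n) \<longleftrightarrow> (if n = 0 then Suc m = k else CG_lowest k n)"
  using CG_coeff_below[OF assms] CG_coeff_add_one[OF assms] Min_support_put_top[of m _ 1]
    fib_pos[of "2 * m + 2"] unfolding CG_lowest_def by auto

lemma CG_lowest_add_two:
  assumes "n < fib (2 * m + 1)"
  shows "CG_lowest k (2 * fib (2 * m + 2) + n) \<longleftrightarrow> (if n = 0 then Suc m = k else CG_lowest k n)"
proof -
  have "n < fib (2 * m + 2)" using assms fib_mono[of "2 * m + 1" "2 * m + 2"] by simp
  then show ?thesis
    using CG_coeff_below[OF \<open>n < fib (2 * m + 2)\<close>] CG_coeff_add_two[OF assms] Min_support_put_top[of m _ 2]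
      fib_pos[of "2 * m + 2"] unfolding CG_lowest_def by auto
qed

lemma not_CG_lowest_below:
  assumes "n < fib (2 * m + 2)" "m < k"
  shows "\<not> CG_lowest k n"
proof
  assume lowest: "CG_lowest k n"
  have c: "CG_digits m (CG_coeff n)" "CG_val m (CG_coeff n) = n" using CG_coeff_below[OF assms(1)] by blast+
  then have "\<exists>i. CG_coeff n i \<noteq> 0" using lowest CG_val_eq_0_iff[OF c(1)] unfolding CG_lowest_def by auto
  then have "Min {i. CG_coeff n i \<noteq> 0} \<le> m" using Min_support_bounds[OF c(1)] by blast
  then show False using lowest assms(2) unfolding CG_lowest_def by simp
qed

lemma fib_double_less:
  assumes "1 \<le> a" "a < b"
  shows "fib (2 * a) < fib (2 * b)"
proof -
  have "fib (2 * a) < fib (2 * a + 1)"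
    using fib_odd_eq[OF assms(1)] fib_neq_0_nat[of "2 * a - 1"] assms(1) by simp
  also have "\<dots> \<le> fib (2 * b)" using assms by (intro fib_mono) simp
  finally show ?thesis .
qed

lemma fib_double_inj:
  assumes "1 \<le> a" "1 \<le> b" "fib (2 * a) = fib (2 * b)"
  shows "a = b"
  using fib_double_less[OF assms(1)] fib_double_less[OF assms(2)] assms(3)
  by (cases a b rule: linorder_cases) force+

lemma A2k_eq:
  assumes "1 \<le> k"
  shows "A2k k = {n. CG_lowest k n}"
proof -
  have "Min (CG n) = fib (2 * k) \<longleftrightarrow> Min {i. CG_coeff n i \<noteq> 0} = k" if "n \<ge> 1" for n
  proof -
    define I where "I = {i. CG_coeff n i \<noteq> 0}"
    have c: "CG_digits n (CG_coeff n)" "CG_val n (CG_coeff n) = n"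
      using CG_coeff_below[OF less_fib_double] by blast+
    then have "\<exists>i. CG_coeff n i \<noteq> 0" using that CG_val_eq_0_iff[OF c(1)] by auto
    then have I: "finite I" "I \<noteq> {}" "Min I \<ge> 1"
      using Min_support_bounds[OF c(1)] unfolding I_def by auto
    have "CG n = (\<lambda>i. fib (2 * i)) ` I"
      unfolding CG_def I_def using CG_digits_support[OF c(1)] by force
    then have "Min (CG n) = fib (2 * Min I)"
      using mono_Min_commute[OF _ I(1,2), of "\<lambda>i. fib (2 * i)"] by (simp add: fib_mono monoI)
    then show ?thesis unfolding I_def[symmetric] using fib_double_inj[OF I(3) assms] by auto
  qed
  then show ?thesis unfolding A2k_def CG_lowest_def by auto
qed

definition lowest_word :: "nat \<Rightarrow> nat \<Rightarrow> bool list" where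
  "lowest_word k N = map (CG_lowest k) [0..<N]"

lemma length_lowest_word: "length (lowest_word k N) = N"
  unfolding lowest_word_def by simp

lemma map_upt_add: "map f [0..<a + b] = map f [0..<a] @ map (\<lambda>n. f (a + n)) [0..<b]"
  by (rule nth_equalityI) (auto simp: nth_append)

lemma map_shift_eq_Cons_tl:
  assumes "1 \<le> N" "\<And>n. 0 < n \<Longrightarrow> n < N \<Longrightarrow> f (a + n) = f n"
  shows "map (\<lambda>n. f (a + n)) [0..<N] = f a # tl (map f [0..<N])"
proof (rule nth_equalityI)
  fix i assume "i < length (map (\<lambda>n. f (a + n)) [0..<N])"
  then show "map (\<lambda>n. f (a + n)) [0..<N] ! i = (f a # tl (map f [0..<N])) ! i"
    using assms(2)[of i] by (cases i) (auto simp: nth_tl)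
qed (use assms(1) in simp)

lemma lowest_word_even_Suc:
  fixes k m :: nat
  defines "W \<equiv> lowest_word k (fib (2 * m + 2))" and "U \<equiv> lowest_word k (fib (2 * m + 1))"
  shows "lowest_word k (fib (2 * Suc m + 2)) = W @ ((Suc m = k) # tl W) @ ((Suc m = k) # tl U)"
proof -
  define F where "F = fib (2 * m + 2)"
  define G where "G = fib (2 * m + 1)"
  have "1 \<le> F" "1 \<le> G" unfolding F_def G_def by (rule fib_pos, simp)+
  have one: "CG_lowest k (F + n) = (if n = 0 then Suc m = k else CG_lowest k n)" if "n < F" for n
    using CG_lowest_add_one that unfolding F_def .
  have two: "CG_lowest k (F + F + n) = (if n = 0 then Suc m = k else CG_lowest k n)" if "n < G" for n
    using CG_lowest_add_two[of n m k] that unfolding F_def[symmetric] G_def[symmetric]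
    by (simp add: mult_2)
  have W: "W = map (CG_lowest k) [0..<F]" and U: "U = map (CG_lowest k) [0..<G]"
    unfolding W_def U_def lowest_word_def F_def G_def by simp_all
  have "map (\<lambda>n. CG_lowest k (F + n)) [0..<F] = CG_lowest k F # tl W"
    unfolding W by (rule map_shift_eq_Cons_tl[OF \<open>1 \<le> F\<close>]) (simp add: one)
  moreover have "map (\<lambda>n. CG_lowest k (F + F + n)) [0..<G] = CG_lowest k (F + F) # tl U"
    unfolding U by (rule map_shift_eq_Cons_tl[OF \<open>1 \<le> G\<close>]) (simp add: two)
  moreover have "lowest_word k (fib (2 * Suc m + 2)) = map (CG_lowest k) [0..<F + (F + G)]"
    unfolding lowest_word_def fib_even_Suc F_def[symmetric] G_def[symmetric] by (simp only: mult_2 add.assoc)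
  moreover have "CG_lowest k F = (Suc m = k)" "CG_lowest k (F + F) = (Suc m = k)"
    using one[of 0] two[of 0] \<open>1 \<le> F\<close> \<open>1 \<le> G\<close> by simp_all
  ultimately show ?thesis unfolding W by (simp add: map_upt_add add.assoc)
qed

lemma lowest_word_odd_Suc:
  fixes k m :: nat
  defines "W \<equiv> lowest_word k (fib (2 * m + 2))" and "U \<equiv> lowest_word k (fib (2 * m + 1))"
  shows "lowest_word k (fib (2 * Suc m + 1)) = W @ ((Suc m = k) # tl U)"
proof -
  define F where "F = fib (2 * m + 2)"
  define G where "G = fib (2 * m + 1)"
  have "1 \<le> G" "G \<le> F" unfolding F_def G_def by (rule fib_pos, simp) (rule fib_mono, simp)
  have one: "CG_lowest k (F + n) = (if n = 0 then Suc m = k else CG_lowest k n)" if "n < G" for n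
    using CG_lowest_add_one that \<open>G \<le> F\<close> unfolding F_def by simp
  have W: "W = map (CG_lowest k) [0..<F]" and U: "U = map (CG_lowest k) [0..<G]"
    unfolding W_def U_def lowest_word_def F_def G_def by simp_all
  have "map (\<lambda>n. CG_lowest k (F + n)) [0..<G] = CG_lowest k F # tl U"
    unfolding U by (rule map_shift_eq_Cons_tl[OF \<open>1 \<le> G\<close>]) (simp add: one)
  moreover have "CG_lowest k F = (Suc m = k)" using one[of 0] \<open>1 \<le> G\<close> by simp
  moreover have "lowest_word k (fib (2 * Suc m + 1)) = map (CG_lowest k) [0..<F + G]"
    unfolding lowest_word_def fib_odd_Suc F_def G_def ..
  ultimately show ?thesis unfolding W by (simp add: map_upt_add)
qed

lemma lowest_word_below:
  assumes "m < k" "N \<le> fib (2 * m + 2)"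
  shows "lowest_word k N = replicate N False"
  unfolding lowest_word_def
  by (rule nth_equalityI) (use not_CG_lowest_below[OF _ assms(1)] assms(2) in auto)

fun gap :: "nat \<Rightarrow> letter \<Rightarrow> nat" where
  "gap k A = fib (2 * k)"
| "gap k B = fib (2 * k + 1)"

definition block :: "nat \<Rightarrow> bool list" where
  "block l = True # replicate (l - 1) False"

definition block_word :: "nat \<Rightarrow> letter list \<Rightarrow> bool list" where
  "block_word k ws =
     replicate (fib (2 * k)) False @ concat (map block (map (gap k) ws @ [fib (2 * k - 1)]))"

lemma gap_pos: "k \<ge> 1 \<Longrightarrow> gap k x \<ge> 1"
  by (cases x) (simp_all add: Suc_le_eq fib_neq_0_nat)

lemma length_concat_blocks: "\<forall>l\<in>set ls. l \<ge> 1 \<Longrightarrow> length (concat (map block ls)) = sum_list ls"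
  by (induction ls) (auto simp: block_def)

lemma nth_concat_blocks:
  "\<forall>l\<in>set ls. l \<ge> 1 \<Longrightarrow> n < sum_list ls \<Longrightarrow>
     concat (map block ls) ! n \<longleftrightarrow> (\<exists>j<length ls. n = sum_list (take j ls))"
proof (induction ls arbitrary: n)
  case Nil
  then show ?case by simp
next
  case (Cons l ls)
  then have "l \<ge> 1" and len: "length (block l) = l" by (simp_all add: block_def)
  show ?case
  proof (cases "n < l")
    case True
    then show ?thesis using len by (cases n) (auto simp: nth_append block_def Ex_less_Suc2)
  next
    case False
    then show ?thesis using Cons.IH[of "n - l"] Cons.prems \<open>l \<ge> 1\<close> len
      by (auto simp: nth_append Ex_less_Suc2)
  qed
qed

lemma length_block_word:
  assumes "k \<ge> 1"
  shows "length (block_word k ws) = fib (2 * k) + sum_list (map (gap k) ws) + fib (2 * k - 1)"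
proof -
  have "\<forall>l\<in>set (map (gap k) ws @ [fib (2 * k - 1)]). l \<ge> 1"
    using gap_pos[OF assms] fib_pos[of "2 * k - 1"] assms by auto
  from length_concat_blocks[OF this] show ?thesis unfolding block_word_def by simp
qed

lemma nth_block_word:
  assumes "k \<ge> 1" "n < length (block_word k ws)"
  shows "block_word k ws ! n \<longleftrightarrow> (\<exists>j \<le> length ws. n = fib (2 * k) + sum_list (take j (map (gap k) ws)))"
proof (cases "n < fib (2 * k)")
  case True
  then show ?thesis unfolding block_word_def by (auto simp: nth_append)
next
  case False
  define ls where "ls = map (gap k) ws @ [fib (2 * k - 1)]"
  have pos: "\<forall>l\<in>set ls. l \<ge> 1"
    unfolding ls_def using gap_pos[OF assms(1)] fib_pos[of "2 * k - 1"] assms(1) by auto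
  have "n - fib (2 * k) < sum_list ls"
    using assms length_block_word False unfolding ls_def by simp
  then have "block_word k ws ! n \<longleftrightarrow> (\<exists>j<length ls. n - fib (2 * k) = sum_list (take j ls))"
    using False nth_concat_blocks[OF pos] unfolding block_word_def ls_def[symmetric] by (simp add: nth_append)
  also have "\<dots> \<longleftrightarrow> (\<exists>j \<le> length ws. n = fib (2 * k) + sum_list (take j (map (gap k) ws)))"
    using False unfolding ls_def by (auto simp: less_Suc_eq_le)
  finally show ?thesis .
qed

lemma block_word_append:
  assumes "k \<ge> 1"
  shows "block_word k u @ block_word k v = block_word k (u @ [B] @ v)"
proof -
  have "fib (2 * k - 1) - 1 + fib (2 * k) = fib (2 * k + 1) - 1"
    using fib_odd_eq[OF assms] fib_pos[of "2 * k - 1"] assms by simp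
  then have "block (fib (2 * k - 1)) @ replicate (fib (2 * k)) False = block (gap k B)"
    unfolding block_def by (simp add: replicate_add[symmetric])
  then show ?thesis unfolding block_word_def by simp
qed

lemma Cons_False_tl_block_word: "k \<ge> 1 \<Longrightarrow> False # tl (block_word k ws) = block_word k ws"
  using fib_pos[of "2 * k"] unfolding block_word_def by (cases "fib (2 * k)") auto

text \<open>The components of \<open>PQ i\<close> are \<open>A S_(2i+2)\<close> and \<open>A S_(2i+1)\<close> without their last two letters
  (\<open>PQ_golden\<close>).\<close>

fun PQ :: "nat \<Rightarrow> letter list \<times> letter list" where
  "PQ 0 = ([A], [])"
| "PQ (Suc i) = (fst (PQ i) @ [B] @ fst (PQ i) @ [B] @ snd (PQ i), fst (PQ i) @ [B] @ snd (PQ i))"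

lemma lowest_word_block_word:
  assumes "k \<ge> 1"
  shows "lowest_word k (fib (2 * (k + i) + 2)) = block_word k (fst (PQ i)) \<and>
         lowest_word k (fib (2 * (k + i) + 1)) = block_word k (snd (PQ i))"
proof (induction i)
  case 0
  obtain k' where k': "k = Suc k'" using assms by (cases k) auto
  have W: "lowest_word k (fib (2 * k' + 2)) = replicate (fib (2 * k)) False"
    using lowest_word_below[of k' k] k' by simp
  have U: "lowest_word k (fib (2 * k' + 1)) = replicate (fib (2 * k - 1)) False"
    using lowest_word_below[of k' k] fib_mono[of "2 * k' + 1" "2 * k' + 2"] k' by simp
  show ?case
    using lowest_word_even_Suc[of k k'] lowest_word_odd_Suc[of k k'] k'
    unfolding W U by (simp add: block_word_def block_def)
next
  case (Suc i)
  have "Suc (k + i) \<noteq> k" and e: "k + Suc i = Suc (k + i)" by simp_all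
  then show ?case
    unfolding e lowest_word_even_Suc lowest_word_odd_Suc Suc.IH[THEN conjunct1] Suc.IH[THEN conjunct2]
    by (simp add: Cons_False_tl_block_word[OF assms] block_word_append[OF assms])
qed

lemma S_Suc_Suc: "n \<ge> 1 \<Longrightarrow> S (n + 2) = S (n + 1) @ S n"
  by (cases n) auto

lemma S_prefix: "m \<le> n \<Longrightarrow> \<exists>zs. S n = S m @ zs"
proof (induction n rule: dec_induct)
  case (step n)
  moreover have "\<exists>zs. S (Suc n) = S n @ zs"
    by (cases n rule: S.cases) auto
  ultimately show ?case by force
qed simp

lemma golden_eq_nth_S:
  assumes "1 \<le> t" "t \<le> length (S N)"
  shows "golden t = S N ! (t - 1)"
proof -
  define L where "L = (LEAST n. t \<le> length (S n))"
  have "t \<le> length (S L)" "L \<le> N" unfolding L_def by (auto intro: LeastI Least_le assms(2))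
  then have "t - 1 < length (S L)" using assms(1) by simp
  moreover obtain zs where "S N = S L @ zs" using S_prefix[OF \<open>L \<le> N\<close>] by blast
  ultimately show ?thesis unfolding golden_def L_def[symmetric] using assms(1) by (simp add: nth_append)
qed

lemma S_append_swap:
  "n \<ge> 1 \<Longrightarrow> \<exists>u x y. S n @ S (Suc n) = u @ [x, y] \<and> S (Suc n) @ S n = u @ [y, x]"
proof (induction n rule: nat_induct_at_least)
  case base
  show ?case by (intro exI[of _ "[B]"] exI[of _ B] exI[of _ A]) (simp add: numeral_2_eq_2)
next
  case (Suc n)
  then obtain u x y where uxy: "S n @ S (Suc n) = u @ [x, y]" "S (Suc n) @ S n = u @ [y, x]" by blast
  have S: "S (Suc (Suc n)) = S (Suc n) @ S n" using S_Suc_Suc[OF Suc.hyps] by simp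
  have "S (Suc n) @ S (Suc (Suc n)) = (S (Suc n) @ u) @ [y, x]" unfolding S using uxy(2) by simp
  moreover have "S (Suc (Suc n)) @ S (Suc n) = (S (Suc n) @ u) @ [x, y]" unfolding S using uxy(1) by simp
  ultimately show ?case by blast
qed

lemma PQ_golden: "fst (PQ i) @ [B, A] = A # S (2 * i + 2) \<and> snd (PQ i) @ [A, B] = A # S (2 * i + 1)"
proof (induction i)
  case 0
  show ?case by (simp add: numeral_2_eq_2)
next
  case (Suc i)
  define p where "p = fst (PQ i)"
  define q where "q = snd (PQ i)"
  have p: "p @ [B, A] = A # S (2 * i + 2)" and q: "q @ [A, B] = A # S (2 * i + 1)"
    using Suc.IH unfolding p_def q_def by blast+
  have S3: "S (2 * i + 3) = S (2 * i + 2) @ S (2 * i + 1)"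
    using S_Suc_Suc[of "2 * i + 1"] by (simp add: numeral_3_eq_3)
  have S4: "S (2 * i + 4) = S (2 * i + 3) @ S (2 * i + 2)"
    using S_Suc_Suc[of "2 * i + 2"] by (simp add: numeral_3_eq_3 numeral_eq_Suc)
  obtain u x y where u: "S (2 * i + 1) @ S (2 * i + 2) = u @ [x, y]" "S (2 * i + 2) @ S (2 * i + 1) = u @ [y, x]"
    using S_append_swap[of "2 * i + 1"] by auto
  have "(A # u) @ [y, x] = (A # S (2 * i + 2)) @ S (2 * i + 1)" using u(2) by simp
  also have "\<dots> = p @ [B] @ (A # S (2 * i + 1))" unfolding p[symmetric] by simp
  also have "\<dots> = (p @ [B] @ q) @ [A, B]" unfolding q[symmetric] by simp
  finally have pq: "A # u = p @ [B] @ q" "x = B" "y = A" by simp_all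
  have "snd (PQ (Suc i)) @ [A, B] = (p @ [B, A]) @ S (2 * i + 1)"
    using q unfolding p_def q_def by simp
  moreover have "fst (PQ (Suc i)) @ [B, A] = (p @ [B, A]) @ u @ [x, y]"
    using pq unfolding p_def q_def by simp
  ultimately show ?case using p u(1) S3 S4 by (simp add: numeral_eq_Suc)
qed

text \<open>Letter \<open>t\<close> (counted from 0) of the infinite word \<open>A S\<close>.\<close>

definition gap_letter :: "nat \<Rightarrow> letter" where
  "gap_letter t = (if t = 0 then A else golden t)"

definition A2k_elem :: "nat \<Rightarrow> nat \<Rightarrow> nat" where
  "A2k_elem k j = fib (2 * k) + (\<Sum>t<j. gap k (gap_letter t))"

lemma nth_fst_PQ: "t < length (fst (PQ i)) \<Longrightarrow> fst (PQ i) ! t = gap_letter t"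
proof -
  assume t: "t < length (fst (PQ i))"
  have PQ: "fst (PQ i) @ [B, A] = A # S (2 * i + 2)" using PQ_golden by blast
  then have "fst (PQ i) ! t = (A # S (2 * i + 2)) ! t" using t by (metis nth_append)
  moreover have "length (S (2 * i + 2)) = Suc (length (fst (PQ i)))"
    using arg_cong[OF PQ, of length] by simp
  ultimately show ?thesis using t golden_eq_nth_S[of t "2 * i + 2"] unfolding gap_letter_def
    by (cases t) auto
qed

lemma length_fst_PQ: "i < length (fst (PQ i))"
  by (induction i) auto

lemma sum_list_take_gaps:
  "j \<le> length (fst (PQ i)) \<Longrightarrow> sum_list (take j (map (gap k) (fst (PQ i)))) = (\<Sum>t<j. gap k (gap_letter t))"
  by (induction j) (auto simp: take_Suc_conv_app_nth nth_fst_PQ)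

lemma CG_lowest_iff_A2k_elem_below:
  assumes "k \<ge> 1" "n < fib (2 * (k + i) + 2)"
  shows "CG_lowest k n \<longleftrightarrow> (\<exists>j \<le> length (fst (PQ i)). n = A2k_elem k j)"
proof -
  have W: "lowest_word k (fib (2 * (k + i) + 2)) = block_word k (fst (PQ i))"
    using lowest_word_block_word[OF assms(1)] by blast
  then have len: "n < length (block_word k (fst (PQ i)))" using assms(2) by (metis length_lowest_word)
  have "CG_lowest k n \<longleftrightarrow> lowest_word k (fib (2 * (k + i) + 2)) ! n"
    using assms(2) unfolding lowest_word_def by simp
  also have "\<dots> \<longleftrightarrow> (\<exists>j \<le> length (fst (PQ i)). n = fib (2 * k) + sum_list (take j (map (gap k) (fst (PQ i)))))"
    unfolding W by (rule nth_block_word[OF assms(1) len])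
  also have "\<dots> \<longleftrightarrow> (\<exists>j \<le> length (fst (PQ i)). n = A2k_elem k j)"
    unfolding A2k_elem_def using sum_list_take_gaps[of _ i k] by auto
  finally show ?thesis .
qed

lemma A2k_elem_less_fib: "k \<ge> 1 \<Longrightarrow> A2k_elem k j < fib (2 * (k + j) + 2)"
proof -
  assume k: "k \<ge> 1"
  let ?P = "fst (PQ j)"
  have "j \<le> length ?P" using length_fst_PQ[of j] by simp
  then have "A2k_elem k j = fib (2 * k) + sum_list (take j (map (gap k) ?P))"
    unfolding A2k_elem_def by (simp add: sum_list_take_gaps)
  also have "\<dots> \<le> fib (2 * k) + sum_list (map (gap k) ?P)"
    using sum_list_append[of "take j (map (gap k) ?P)" "drop j (map (gap k) ?P)"] by simp
  also have "\<dots> < length (block_word k ?P)"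
    using length_block_word[OF k] fib_neq_0_nat[of "2 * k - 1"] k by simp
  also have "\<dots> = fib (2 * (k + j) + 2)"
    using lowest_word_block_word[OF k, of j] by (metis length_lowest_word)
  finally show ?thesis .
qed

lemma CG_lowest_iff_A2k_elem:
  assumes "k \<ge> 1"
  shows "CG_lowest k n \<longleftrightarrow> (\<exists>j. n = A2k_elem k j)"
proof
  assume "CG_lowest k n"
  moreover have "n < fib (2 * (k + n) + 2)"
    using less_fib_double[of n] fib_mono[of "2 * n + 2" "2 * (k + n) + 2"] by simp
  ultimately show "\<exists>j. n = A2k_elem k j" using CG_lowest_iff_A2k_elem_below[OF assms] by blast
next
  assume "\<exists>j. n = A2k_elem k j"
  then obtain j where "n = A2k_elem k j" by blast
  then show "CG_lowest k n"
    using CG_lowest_iff_A2k_elem_below[OF assms A2k_elem_less_fib[OF assms]]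
      less_imp_le[OF length_fst_PQ[of j]] by blast
qed

lemma A2k_elem_Suc: "A2k_elem k (Suc j) = A2k_elem k j + gap k (gap_letter j)"
  unfolding A2k_elem_def by simp

lemma strict_mono_A2k_elem: "k \<ge> 1 \<Longrightarrow> strict_mono (A2k_elem k)"
  unfolding strict_mono_Suc_iff A2k_elem_Suc using gap_pos by (simp add: Suc_le_eq)

lemma enumerate_range_strict_mono:
  fixes f :: "nat \<Rightarrow> nat"
  assumes "strict_mono f"
  shows "enumerate (range f) n = f n"
proof (induction n)
  case 0
  show ?case unfolding enumerate_0
    by (rule Least_equality) (auto simp: strict_mono_less_eq[OF assms])
next
  case (Suc n)
  have "infinite (range f)" using range_inj_infinite strict_mono_imp_inj_on[OF assms] by blast
  show ?case unfolding enumerate_Suc''[OF \<open>infinite (range f)\<close>] Suc.IH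
    by (rule Least_equality) (auto simp: strict_mono_less[OF assms] strict_mono_less_eq[OF assms])
qed

theorem lemma4p2:
  fixes k j :: nat
  assumes "k \<ge> 1" and "j \<ge> 2"
  shows "int (q k (j + 1)) - int (q k j) =
           (if golden (j - 1) = A then int (fib (2 * k)) else int (fib (2 * k + 1)))"
proof -
  have "A2k k = range (A2k_elem k)"
    using A2k_eq[OF assms(1)] CG_lowest_iff_A2k_elem[OF assms(1)] by auto
  then have q: "q k i = A2k_elem k (i - 1)" for i
    unfolding q_def using enumerate_range_strict_mono[OF strict_mono_A2k_elem[OF assms(1)]] by simp
  have "A2k_elem k j = A2k_elem k (j - 1) + gap k (golden (j - 1))"
    using A2k_elem_Suc[of k "j - 1"] assms(2) by (simp add: gap_letter_def)
  then show ?thesis unfolding q by (cases "golden (j - 1)") simp_all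
qed

end
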